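(* Let $(A_i)_{i\ge1}$ be a sequence of $\mathbb{G}$-predictable sets with $A_i\in\mathcal{L}^o$ for all $i$. Then $\bigcup_{i\ge1}A_i\in\mathcal{L}^o$.
   Context: Let $(\Omega,\mathcal{A},\mathbb{Q})$ be a probability space with a right-continuous filtration $\mathbb{F}=(\mathcal{F}_t)_{t\ge0}$ such that $\mathcal{F}_0$ contains $\mathcal{N}^{\mathcal{F}_\infty}$, where for a $\sigma$-algebra $\mathcal{T}\subset\mathcal{A}$, $\mathcal{N}^{\mathcal{T}}$ denotes the $\sigma$-algebra generated by all subsets of $\mathcal{T}$-measurable $\mathbb{Q}$-null sets. Let $\tau$ be a random variable with values in $[0,\infty]$, let $\mathcal{N}=\mathcal{N}^{\sigma(\tau)\vee\mathcal{F}_\infty}$, and let $\mathbb{G}=(\mathcal{G}_t)_{t\ge0}$ with $\mathcal{G}_t=\mathcal{N}\vee\bigcap_{s>t}(\mathcal{F}_s\vee\sigma(\tau\wedge s))$. Identities between processes are understood up to indistinguishability outside an $\mathcal{N}$-measurable $\mathbb{Q}$-null set. For a function $Y''$ on $[0,\infty]\times(\mathbb{R}_+\times\Omega)$, $Y''(\tau)$ denotes the process $(t,\omega)\mapsto Y''(\tau(\omega),t,\omega)$. A $\mathbb{G}$-optional process $Y$ satisfies the optional splitting formula on a $\mathbb{G}$-optional set $A$ (at $\tau$ with respect to $\mathbb{F}$) if there exist $Y'\in\mathcal{O}(\mathbb{F})$ and a $\mathcal{B}[0,\infty]\otimes\mathcal{O}(\mathbb{F})$-measurable function $Y''$ with $Y\mathbf{1}_A=(Y'\mathbf{1}_{[0,\tau)}+Y''(\tau)\mathbf{1}_{[\tau,\infty)})\mathbf{1}_A$.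 $\mathcal{L}^o$ is the family of $\mathbb{G}$-optional sets $A$ such that every $\mathbb{G}$-optional process satisfies the optional splitting formula on $A$. *)

theory Defs
  imports "HOL-Probability.Probability"
begin

text \<open>Sigma-algebras on the sample space \<Omega> = space Q are represented as sets of sets.
  Processes are functions on pairs (time, outcome); the time domain is [0,\<infinity>).\<close>

definition adapted :: "'a set \<Rightarrow> (real \<Rightarrow> 'a set set) \<Rightarrow> (real \<times> 'a \<Rightarrow> real) \<Rightarrow> bool" where
  "adapted \<Omega> F X \<longleftrightarrow>
     (\<forall>t\<ge>0. \<forall>B\<in>sets (borel :: real measure). {\<omega>\<in>\<Omega>. X (t, \<omega>) \<in> B} \<in> F t)"

definition cadlag :: "'a set \<Rightarrow> (real \<times> 'a \<Rightarrow> real) \<Rightarrow> bool" where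
  "cadlag \<Omega> X \<longleftrightarrow> (\<forall>\<omega>\<in>\<Omega>.
     (\<forall>t\<ge>0. ((\<lambda>s. X (s, \<omega>)) \<longlongrightarrow> X (t, \<omega>)) (at_right t)) \<and>
     (\<forall>t>0. \<exists>l. ((\<lambda>s. X (s, \<omega>)) \<longlongrightarrow> l) (at_left t)))"

definition left_continuous :: "'a set \<Rightarrow> (real \<times> 'a \<Rightarrow> real) \<Rightarrow> bool" where
  "left_continuous \<Omega> X \<longleftrightarrow> (\<forall>\<omega>\<in>\<Omega>.
     \<forall>t>0. ((\<lambda>s. X (s, \<omega>)) \<longlongrightarrow> X (t, \<omega>)) (at_left t))"

definition optional_measure :: "'a set \<Rightarrow> (real \<Rightarrow> 'a set set) \<Rightarrow> (real \<times> 'a) measure" where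
  "optional_measure \<Omega> F = sigma ({0..} \<times> \<Omega>)
     {{p\<in>{0..} \<times> \<Omega>. X p \<in> B} | X B. cadlag \<Omega> X \<and> adapted \<Omega> F X \<and> B \<in> sets (borel :: real measure)}"

definition predictable_measure :: "'a set \<Rightarrow> (real \<Rightarrow> 'a set set) \<Rightarrow> (real \<times> 'a) measure" where
  "predictable_measure \<Omega> F = sigma ({0..} \<times> \<Omega>)
     {{p\<in>{0..} \<times> \<Omega>. X p \<in> B} | X B. left_continuous \<Omega> X \<and> adapted \<Omega> F X \<and> B \<in> sets (borel :: real measure)}"

definition rc_filtration :: "'a measure \<Rightarrow> (real \<Rightarrow> 'a set set) \<Rightarrow> bool" where
  "rc_filtration Q F \<longleftrightarrow>
     (\<forall>t\<ge>0. sigma_algebra (space Q) (F t) \<and> F t \<subseteq> sets Q) \<and>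
     (\<forall>s t. 0 \<le> s \<longrightarrow> s \<le> t \<longrightarrow> F s \<subseteq> F t) \<and>
     (\<forall>t\<ge>0. F t = (\<Inter>s\<in>{t<..}. F s))"

definition F_infty :: "'a set \<Rightarrow> (real \<Rightarrow> 'a set set) \<Rightarrow> 'a set set" where
  "F_infty \<Omega> F = sigma_sets \<Omega> (\<Union>t\<in>{0..}. F t)"

definition null_sigma :: "'a measure \<Rightarrow> 'a set set \<Rightarrow> 'a set set" where
  "null_sigma Q T = sigma_sets (space Q) {B. \<exists>C\<in>T. C \<in> sets Q \<and> emeasure Q C = 0 \<and> B \<subseteq> C}"

definition sigma_rv :: "'a set \<Rightarrow> ('a \<Rightarrow> ereal) \<Rightarrow> 'a set set" where
  "sigma_rv \<Omega> Z = {Z -` B \<inter> \<Omega> | B. B \<in> sets (borel :: ereal measure)}"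

definition tau_Finf :: "'a measure \<Rightarrow> (real \<Rightarrow> 'a set set) \<Rightarrow> ('a \<Rightarrow> ereal) \<Rightarrow> 'a set set" where
  "tau_Finf Q F \<tau> = sigma_sets (space Q) (sigma_rv (space Q) \<tau> \<union> F_infty (space Q) F)"

text \<open>The progressively enlarged filtration G.\<close>
definition Gfilt :: "'a measure \<Rightarrow> (real \<Rightarrow> 'a set set) \<Rightarrow> ('a \<Rightarrow> ereal) \<Rightarrow> real \<Rightarrow> 'a set set" where
  "Gfilt Q F \<tau> t = sigma_sets (space Q)
     (null_sigma Q (tau_Finf Q F \<tau>) \<union>
      (\<Inter>s\<in>{t<..}. sigma_sets (space Q) (F s \<union> sigma_rv (space Q) (\<lambda>\<omega>. min (\<tau> \<omega>) (ereal s)))))"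

text \<open>Optional splitting formula for Y on A (at \<tau> w.r.t. F); identities hold outside an
  N-measurable Q-null set, i.e. outside a (sigma(\<tau>) \<or> F_\<infinity>)-measurable Q-null set.\<close>
definition optional_splitting :: "'a measure \<Rightarrow> (real \<Rightarrow> 'a set set) \<Rightarrow> ('a \<Rightarrow> ereal)
    \<Rightarrow> (real \<times> 'a \<Rightarrow> real) \<Rightarrow> (real \<times> 'a) set \<Rightarrow> bool" where
  "optional_splitting Q F \<tau> Y A \<longleftrightarrow>
     (\<exists>Y' (Y'' :: ereal \<Rightarrow> real \<times> 'a \<Rightarrow> real).
        Y' \<in> borel_measurable (optional_measure (space Q) F) \<and>
        (\<lambda>(u, p). Y'' u p) \<in> borel_measurable
            (restrict_space (borel :: ereal measure) {0..} \<Otimes>\<^sub>M optional_measure (space Q) F) \<and>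
        (\<exists>Nl \<in> tau_Finf Q F \<tau>. Nl \<in> sets Q \<and> emeasure Q Nl = 0 \<and>
           (\<forall>\<omega>\<in>space Q - Nl. \<forall>t\<ge>0.
              Y (t, \<omega>) * indicator A (t, \<omega>) =
              (Y' (t, \<omega>) * indicator {p. ereal (fst p) < \<tau> (snd p)} (t, \<omega>)
               + Y'' (\<tau> \<omega>) (t, \<omega>) * indicator {p. \<tau> (snd p) \<le> ereal (fst p)} (t, \<omega>))
              * indicator A (t, \<omega>))))"

definition Lo :: "'a measure \<Rightarrow> (real \<Rightarrow> 'a set set) \<Rightarrow> ('a \<Rightarrow> ereal) \<Rightarrow> (real \<times> 'a) set set" where
  "Lo Q F \<tau> = {A. A \<in> sets (optional_measure (space Q) (Gfilt Q F \<tau>)) \<and>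
     (\<forall>Y \<in> borel_measurable (optional_measure (space Q) (Gfilt Q F \<tau>)).
        optional_splitting Q F \<tau> Y A)}"

end

theory Submission
  imports Defs
begin

text \<open>Call a process X split if X = Y' on [0, \<tau>) and X = Y''(\<tau>) on [\<tau>, \<infinity>) everywhere on
  [0, \<infinity>) \<times> \<Omega> outside a negligible set, with Y', Y'' as in the optional splitting formula.
  Split processes are closed under Borel operations and pointwise limits. Right continuity of F
  gives Jeulin's description of G_a: before \<tau> a G_a-set agrees with an F_a-set, after \<tau> with
  a set depending (B \<otimes> F_s)-measurably on (\<tau>, \<omega>), for every s > a. Hence Z(\<omega>) 1_(a,b](t)
  splits for G_a-measurable Z, and so do the dyadic approximations of left continuous adapted
  processes, their limits, and all G-predictable indicators. For A_i \<in> L^o this makes Y 1_A_i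
  split for every G-optional Y; by Y 1_(A \<union> B) = Y 1_A + Y 1_B - Y 1_A 1_B and a monotone
  limit, Y 1_(\<Union> A_i) splits too, which is the optional splitting formula on the union.\<close>

lemma ex_one_over_Suc_less: "0 < (x::real) \<Longrightarrow> \<exists>m::nat. 1 / (real m + 1) < x"
  using reals_Archimedean by (simp add: inverse_eq_divide add.commute)

lemma one_over_Suc_antimono: "M \<le> m \<Longrightarrow> 1 / (real m + 1) \<le> 1 / (real M + 1)"
  by (intro divide_left_mono) auto

definition dyadic_below :: "real \<Rightarrow> nat \<Rightarrow> real" where
  "dyadic_below t n = (of_int \<lceil>t * 2^n\<rceil> - 1) / 2^n"

lemma dyadic_below_less: "dyadic_below t n < t"
proof -
  have "of_int \<lceil>t * 2^n\<rceil> - 1 < t * 2^n" by linarith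
  then show ?thesis unfolding dyadic_below_def by (simp add: divide_less_eq)
qed

lemma dyadic_below_ge: "t - (1/2)^n \<le> dyadic_below t n"
proof -
  have "(t * 2^n - 1) / 2^n \<le> (of_int \<lceil>t * 2^n\<rceil> - 1) / 2^n"
    by (intro divide_right_mono) auto
  moreover have "(t * 2^n - 1) / 2^n = t - (1/2)^n" by (simp add: field_simps)
  ultimately show ?thesis unfolding dyadic_below_def by simp
qed

lemma dyadic_below_tendsto: "filterlim (dyadic_below t) (at_left t) sequentially"
proof (rule tendsto_imp_filterlim_at_left)
  have lim: "(\<lambda>n. t - (1/2::real)^n) \<longlonglongrightarrow> t - 0"
    by (intro tendsto_diff tendsto_const LIMSEQ_realpow_zero) auto
  show "dyadic_below t \<longlonglongrightarrow> t"
  proof (rule tendsto_sandwich[of "\<lambda>n. t - (1/2)^n" _ _ "\<lambda>n. t"])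
    show "\<forall>\<^sub>F n in sequentially. t - (1/2)^n \<le> dyadic_below t n"
      by (simp add: dyadic_below_ge)
    show "\<forall>\<^sub>F n in sequentially. dyadic_below t n \<le> t"
      by (simp add: dyadic_below_less less_imp_le)
  qed (use lim in simp_all)
qed (simp add: dyadic_below_less)

lemma dyadic_interval_iff:
  "t \<in> {real k / 2^n<..(real k + 1) / 2^n} \<longleftrightarrow> \<lceil>t * 2^n\<rceil> = int k + 1"
proof -
  have "(0::real) < 2^n" by simp
  then have "t \<in> {real k / 2^n<..(real k + 1) / 2^n} \<longleftrightarrow> real k < t * 2^n \<and> t * 2^n \<le> real k + 1"
    by (simp add: divide_less_eq le_divide_eq)
  also have "\<dots> \<longleftrightarrow> \<lceil>t * 2^n\<rceil> = int k + 1" by (simp add: ceiling_eq_iff)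
  finally show ?thesis .
qed

definition dyadic_approx :: "(real \<Rightarrow> real) \<Rightarrow> nat \<Rightarrow> real \<Rightarrow> real" where
  "dyadic_approx x n t = x 0 * indicator {0} t +
     (\<Sum>k<n * 2^n. x (real k / 2^n) * indicator {real k / 2^n<..(real k + 1) / 2^n} t)"

lemma dyadic_approx_eq:
  assumes "0 < t" "t \<le> real n"
  shows "dyadic_approx x n t = x (dyadic_below t n)"
proof -
  define k0 where "k0 = nat (\<lceil>t * 2^n\<rceil> - 1)"
  have "0 < t * 2^n" using assms(1) by simp
  then have pos: "1 \<le> \<lceil>t * 2^n\<rceil>" by linarith
  have "t * 2^n \<le> real n * 2^n" using assms(2) by simp
  then have "\<lceil>t * 2^n\<rceil> \<le> int (n * 2^n)" by (simp add: ceiling_le_iff)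
  then have k0: "k0 < n * 2^n" unfolding k0_def using pos by linarith
  have "t \<in> {real k / 2^n<..(real k + 1) / 2^n} \<longleftrightarrow> k = k0" for k
    unfolding dyadic_interval_iff k0_def using pos by auto
  then have ind: "indicator {real k / 2^n<..(real k + 1) / 2^n} t = (if k = k0 then 1 else 0 :: real)" for k
    by (simp add: indicator_def)
  have "dyadic_approx x n t = (\<Sum>k<n * 2^n. if k = k0 then x (real k / 2^n) else 0)"
    unfolding dyadic_approx_def using assms(1) by (simp add: ind if_distrib cong: if_cong)
  also have "\<dots> = x (real k0 / 2^n)" using k0 by simp
  also have "real k0 / 2^n = dyadic_below t n" unfolding k0_def dyadic_below_def using pos by simp
  finally show ?thesis .
qed

lemma dyadic_approx_tendsto:
  assumes lc: "\<forall>t>0. (x \<longlongrightarrow> x t) (at_left t)" and t: "0 \<le> t"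
  shows "(\<lambda>n. dyadic_approx x n t) \<longlonglongrightarrow> x t"
proof (cases "t = 0")
  case True
  then have "indicator {real k / 2^n<..(real k + 1) / 2^n} t = (0::real)" for k n
    by (simp add: indicator_def not_less)
  with True show ?thesis by (simp add: dyadic_approx_def)
next
  case False
  with t have t: "0 < t" by simp
  obtain N :: nat where "t \<le> real N" using real_nat_ceiling_ge by blast
  then have "eventually (\<lambda>n. x (dyadic_below t n) = dyadic_approx x n t) sequentially"
    using t by (intro eventually_sequentiallyI[of N] dyadic_approx_eq[symmetric]) auto
  moreover have "(\<lambda>n. x (dyadic_below t n)) \<longlonglongrightarrow> x t"
    using filterlim_compose[OF _ dyadic_below_tendsto] lc t by blast
  ultimately show ?thesis by (rule tendsto_cong[THEN iffD1])
qed

lemma eventually_at_right_mem_atLeastLessThan: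
  "eventually (\<lambda>s. s \<in> {\<alpha>..<\<beta>} \<longleftrightarrow> t \<in> {\<alpha>..<\<beta>}) (at_right (t::real))"
proof -
  consider "t < \<alpha>" | "\<alpha> \<le> t" "t < \<beta>" | "\<beta> \<le> t" by linarith
  then show ?thesis
  proof cases
    case 1 then show ?thesis by (intro eventually_mono[OF eventually_at_right_real[OF 1]]) auto
  next
    case 2 then show ?thesis by (intro eventually_mono[OF eventually_at_right_real[OF 2(2)]]) auto
  next
    case 3 then show ?thesis
      by (intro eventually_mono[OF eventually_at_right_real[of t "t + 1"]]) auto
  qed
qed

lemma eventually_at_left_mem_atLeastLessThan:
  obtains c where "eventually (\<lambda>s. s \<in> {\<alpha>..<\<beta>} \<longleftrightarrow> c) (at_left (t::real))"
proof -
  consider "t \<le> \<alpha>" | "\<alpha> < t" "t \<le> \<beta>" | "\<beta> < t" by linarith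
  then show ?thesis
  proof cases
    case 1 then show ?thesis
      by (intro that[of False] eventually_mono[OF eventually_at_left_real[of "t - 1" t]]) auto
  next
    case 2 then show ?thesis
      by (intro that[of True] eventually_mono[OF eventually_at_left_real[OF 2(1)]]) auto
  next
    case 3 then show ?thesis
      by (intro that[of False] eventually_mono[OF eventually_at_left_real[OF 3]]) auto
  qed
qed

locale enlargement =
  fixes Q :: "'a measure" and F :: "real \<Rightarrow> 'a set set" and \<tau> :: "'a \<Rightarrow> ereal"
  assumes rc_filtration: "rc_filtration Q F"
    and tau_nonneg: "\<forall>\<omega>\<in>space Q. 0 \<le> \<tau> \<omega>"
begin

lemma sigma_algebra_F: "0 \<le> t \<Longrightarrow> sigma_algebra (space Q) (F t)"
  using rc_filtration unfolding rc_filtration_def by blast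

lemma F_mono: "0 \<le> s \<Longrightarrow> s \<le> t \<Longrightarrow> F s \<subseteq> F t"
  using rc_filtration unfolding rc_filtration_def by blast

lemma F_right_continuous: "0 \<le> t \<Longrightarrow> F t = (\<Inter>s\<in>{t<..}. F s)"
  using rc_filtration unfolding rc_filtration_def by blast

lemma F_into_space:
  assumes "0 \<le> t" "A \<in> F t" shows "A \<subseteq> space Q"
proof -
  interpret sigma_algebra "space Q" "F t" using sigma_algebra_F assms(1) .
  show ?thesis using assms(2) by (rule sets_into_space)
qed

lemma limsup_in_F:
  assumes a: "0 \<le> a" and C: "\<And>m::nat. C m \<in> F (a + 1 / (real m + 1))"
  shows "{\<omega>\<in>space Q. \<forall>M. \<exists>m\<ge>M. \<omega> \<in> C m} \<in> F a"
proof -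
  have "{\<omega>\<in>space Q. \<forall>M. \<exists>m\<ge>M. \<omega> \<in> C m} \<in> F s" if s: "a < s" for s
  proof -
    interpret sigma_algebra "space Q" "F s" using sigma_algebra_F s a by auto
    have "0 < s - a" using s by simp
    then obtain M0 where M0: "1 / (real M0 + 1) < s - a" using ex_one_over_Suc_less by blast
    have tail: "C m \<in> F s" if "M0 \<le> m" for m
    proof -
      have "a + 1 / (real m + 1) \<le> s" using one_over_Suc_antimono[OF that] M0 by linarith
      moreover have "0 \<le> a + 1 / (real m + 1)" using a by (simp add: add_nonneg_pos)
      ultimately show ?thesis using F_mono C[of m] by blast
    qed
    have "{\<omega>\<in>space Q. \<forall>M. \<exists>m\<ge>M. \<omega> \<in> C m} = space Q \<inter> (\<Inter>M. \<Union>m\<in>{M + M0..}. C m)"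
    proof (intro set_eqI iffI)
      fix \<omega> assume \<omega>: "\<omega> \<in> space Q \<inter> (\<Inter>M. \<Union>m\<in>{M + M0..}. C m)"
      have "\<exists>m\<ge>M. \<omega> \<in> C m" for M
      proof -
        obtain m where "M + M0 \<le> m" "\<omega> \<in> C m" using \<omega> by blast
        then show ?thesis by (intro exI[of _ m]) simp
      qed
      with \<omega> show "\<omega> \<in> {\<omega>\<in>space Q. \<forall>M. \<exists>m\<ge>M. \<omega> \<in> C m}" by blast
    next
      fix \<omega> assume "\<omega> \<in> {\<omega>\<in>space Q. \<forall>M. \<exists>m\<ge>M. \<omega> \<in> C m}"
      then show "\<omega> \<in> space Q \<inter> (\<Inter>M. \<Union>m\<in>{M + M0..}. C m)" by blast
    qed
    also have "\<dots> \<in> F s" using tail by (intro Int top countable_INT countable_UN) auto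
    finally show ?thesis .
  qed
  then show ?thesis using F_right_continuous[OF a] by blast
qed

definition negligible :: "'a set set" where
  "negligible = {N \<in> tau_Finf Q F \<tau>. N \<in> sets Q \<and> emeasure Q N = 0}"

lemma negligible_empty: "{} \<in> negligible"
  unfolding negligible_def tau_Finf_def by (auto intro: sigma_sets.Empty)

lemma negligible_UN: "(\<And>i::nat. N i \<in> negligible) \<Longrightarrow> (\<Union>i. N i) \<in> negligible"
  unfolding negligible_def tau_Finf_def
  by (auto intro: sigma_sets.Union emeasure_UN_eq_0)

lemma negligible_Un:
  assumes "N1 \<in> negligible" "N2 \<in> negligible" shows "N1 \<union> N2 \<in> negligible"
proof -
  have "N1 \<union> N2 = (\<Union>i::nat. if i = 0 then N1 else N2)" by (auto split: if_splits)
  then show ?thesis using negligible_UN[of "\<lambda>i. if i = 0 then N1 else N2"] assms by simp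
qed

definition ae_preimage_on :: "'b set set \<Rightarrow> ('a \<Rightarrow> 'b) \<Rightarrow> ('a \<Rightarrow> bool) \<Rightarrow> 'a set \<Rightarrow> bool" where
  "ae_preimage_on K g P D \<longleftrightarrow>
     (\<exists>N\<in>negligible. \<exists>C\<in>K. \<forall>\<omega>\<in>space Q - N. P \<omega> \<longrightarrow> (\<omega> \<in> D \<longleftrightarrow> g \<omega> \<in> C))"

lemma ae_preimage_on_sigma_sets:
  assumes K: "sigma_algebra S K" and g: "\<forall>\<omega>\<in>space Q. g \<omega> \<in> S"
    and gen: "\<And>E. E \<in> Gen \<Longrightarrow> ae_preimage_on K g P E"
    and D: "D \<in> sigma_sets (space Q) Gen"
  shows "ae_preimage_on K g P D"
proof -
  interpret K: sigma_algebra S K by (rule K)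
  show ?thesis using D
  proof (induction rule: sigma_sets.induct)
    case (Basic a) then show ?case by (rule gen)
  next
    case Empty then show ?case
      unfolding ae_preimage_on_def using negligible_empty by blast
  next
    case (Compl a)
    then obtain N C where "N \<in> negligible" "C \<in> K" "\<forall>\<omega>\<in>space Q - N. P \<omega> \<longrightarrow> (\<omega> \<in> a \<longleftrightarrow> g \<omega> \<in> C)"
      unfolding ae_preimage_on_def by blast
    moreover have "S - C \<in> K" using \<open>C \<in> K\<close> by blast
    ultimately show ?case using g unfolding ae_preimage_on_def by (intro bexI[of _ N] bexI[of _ "S - C"]) auto
  next
    case (Union a)
    then obtain N C where "\<And>i. N i \<in> negligible" "\<And>i. C i \<in> K"
      "\<And>i. \<forall>\<omega>\<in>space Q - N i. P \<omega> \<longrightarrow> (\<omega> \<in> a i \<longleftrightarrow> g \<omega> \<in> C i)"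
      unfolding ae_preimage_on_def by metis
    moreover have "(\<Union>i. C i) \<in> K" using \<open>\<And>i. C i \<in> K\<close> by blast
    ultimately show ?case unfolding ae_preimage_on_def
      by (intro bexI[of _ "\<Union>i. N i"] bexI[of _ "\<Union>i. C i"] negligible_UN) blast+
  qed
  qed

lemma ae_preimage_on_null_sigma:
  assumes K: "sigma_algebra S K" and g: "\<forall>\<omega>\<in>space Q. g \<omega> \<in> S"
    and D: "D \<in> null_sigma Q (tau_Finf Q F \<tau>)"
  shows "ae_preimage_on K g P D"
  using K g _ D[unfolded null_sigma_def]
proof (rule ae_preimage_on_sigma_sets)
  interpret K: sigma_algebra S K by (rule K)
  fix E assume "E \<in> {B. \<exists>C\<in>tau_Finf Q F \<tau>. C \<in> sets Q \<and> emeasure Q C = 0 \<and> B \<subseteq> C}"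
  then obtain N where "N \<in> negligible" "E \<subseteq> N" unfolding negligible_def by auto
  then show "ae_preimage_on K g P E" unfolding ae_preimage_on_def
    by (intro bexI[of _ N] bexI[of _ "{}"]) auto
qed

definition F_right :: "real \<Rightarrow> 'a set set" where
  "F_right a = (\<Inter>s\<in>{a<..}. sigma_sets (space Q) (F s \<union> sigma_rv (space Q) (\<lambda>\<omega>. min (\<tau> \<omega>) (ereal s))))"

lemma Gfilt_eq: "Gfilt Q F \<tau> a = sigma_sets (space Q) (null_sigma Q (tau_Finf Q F \<tau>) \<union> F_right a)"
  unfolding Gfilt_def F_right_def ..

lemma ae_preimage_on_F_where_min_const:
  assumes s: "0 \<le> s"
    and E: "E \<in> sigma_sets (space Q) (F s \<union> sigma_rv (space Q) (\<lambda>\<omega>. min (\<tau> \<omega>) (ereal s)))"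
    and const: "\<And>\<omega>. \<omega> \<in> space Q \<Longrightarrow> P \<omega> \<Longrightarrow> min (\<tau> \<omega>) (ereal s) = c"
  shows "ae_preimage_on (F s) id P E"
proof (rule ae_preimage_on_sigma_sets[OF sigma_algebra_F[OF s] _ _ E])
  interpret sigma_algebra "space Q" "F s" using sigma_algebra_F[OF s] .
  show "\<forall>\<omega>\<in>space Q. id \<omega> \<in> space Q" by simp
  fix D assume "D \<in> F s \<union> sigma_rv (space Q) (\<lambda>\<omega>. min (\<tau> \<omega>) (ereal s))"
  then show "ae_preimage_on (F s) id P D"
  proof
    assume "D \<in> F s"
    then show ?thesis unfolding ae_preimage_on_def using negligible_empty by force
  next
    assume "D \<in> sigma_rv (space Q) (\<lambda>\<omega>. min (\<tau> \<omega>) (ereal s))"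
    then obtain B where "D = (\<lambda>\<omega>. min (\<tau> \<omega>) (ereal s)) -` B \<inter> space Q"
      unfolding sigma_rv_def by auto
    then have "\<forall>\<omega>\<in>space Q - {}. P \<omega> \<longrightarrow> (\<omega> \<in> D \<longleftrightarrow> id \<omega> \<in> (if c \<in> B then space Q else {}))"
      using const by auto
    then show ?thesis unfolding ae_preimage_on_def using negligible_empty
      by (intro bexI[of _ "{}"] bexI[of _ "if c \<in> B then space Q else {}"]) auto
  qed
qed

text \<open>Right continuity of F enters here: on the event where \<open>Pm m\<close> holds for all large m, D is
  approximated by the limsup of its approximations in \<open>F (a + 1 / (m + 1))\<close>.\<close>

lemma ae_preimage_on_F_of_Gfilt:
  assumes a: "0 \<le> a" and D: "D \<in> Gfilt Q F \<tau> a"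
    and const: "\<And>m \<omega>. \<omega> \<in> space Q \<Longrightarrow> Pm m \<omega> \<Longrightarrow> min (\<tau> \<omega>) (ereal (a + 1 / (real m + 1))) = c m"
    and eventually_Pm: "\<And>\<omega>. \<omega> \<in> space Q \<Longrightarrow> P \<omega> \<Longrightarrow> \<exists>M. \<forall>m\<ge>M. Pm m \<omega>"
  shows "ae_preimage_on (F a) id P D"
proof (rule ae_preimage_on_sigma_sets[OF sigma_algebra_F[OF a] _ _ D[unfolded Gfilt_eq]])
  show "\<forall>\<omega>\<in>space Q. id \<omega> \<in> space Q" by simp
  fix E assume "E \<in> null_sigma Q (tau_Finf Q F \<tau>) \<union> F_right a"
  then show "ae_preimage_on (F a) id P E"
  proof
    assume "E \<in> null_sigma Q (tau_Finf Q F \<tau>)"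
    from ae_preimage_on_null_sigma[OF sigma_algebra_F[OF a] _ this] show ?thesis by simp
  next
    assume E: "E \<in> F_right a"
    have "ae_preimage_on (F (a + 1 / (real m + 1))) id (Pm m) E" for m
      using E a const unfolding F_right_def
      by (intro ae_preimage_on_F_where_min_const) (auto simp: add_nonneg_pos)
    then obtain N C where NC: "\<And>m. N m \<in> negligible" "\<And>m. C m \<in> F (a + 1 / (real m + 1))"
      "\<And>m. \<forall>\<omega>\<in>space Q - N m. Pm m \<omega> \<longrightarrow> (\<omega> \<in> E \<longleftrightarrow> \<omega> \<in> C m)"
      unfolding ae_preimage_on_def id_def by metis
    let ?C = "{\<omega>\<in>space Q. \<forall>M. \<exists>m\<ge>M. \<omega> \<in> C m}"
    have "\<omega> \<in> E \<longleftrightarrow> \<omega> \<in> ?C" if \<omega>: "\<omega> \<in> space Q - (\<Union>m. N m)" "P \<omega>" for \<omega>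
    proof -
      obtain M where "\<forall>m\<ge>M. Pm m \<omega>" using eventually_Pm \<omega> by blast
      then have "\<omega> \<in> E \<longleftrightarrow> \<omega> \<in> C m" if "M \<le> m" for m using NC(3) \<omega>(1) that by blast
      then show ?thesis using \<omega>(1) by (auto intro: max.cobounded1 max.cobounded2)
    qed
    then show ?thesis unfolding ae_preimage_on_def
      by (intro bexI[of _ "\<Union>m. N m"] bexI[of _ ?C] negligible_UN limsup_in_F[OF a] NC) auto
  qed
qed

lemma Gfilt_before_tau:
  assumes a: "0 \<le> a" and D: "D \<in> Gfilt Q F \<tau> a"
  shows "ae_preimage_on (F a) id (\<lambda>\<omega>. ereal a < \<tau> \<omega>) D"
proof (rule ae_preimage_on_F_of_Gfilt[OF a D,
      where Pm = "\<lambda>m \<omega>. ereal (a + 1 / (real m + 1)) \<le> \<tau> \<omega>" and c = "\<lambda>m. ereal (a + 1 / (real m + 1))"])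
  fix \<omega> assume "ereal a < \<tau> \<omega>"
  then show "\<exists>M. \<forall>m\<ge>M. ereal (a + 1 / (real m + 1)) \<le> \<tau> \<omega>"
  proof (cases "\<tau> \<omega>")
    case (real r)
    with \<open>ereal a < \<tau> \<omega>\<close> have "0 < r - a" by simp
    then obtain M where "1 / (real M + 1) < r - a" using ex_one_over_Suc_less by blast
    then show ?thesis using real one_over_Suc_antimono by (intro exI[of _ M]) force
  qed auto
qed (simp add: min_def)

lemma Gfilt_zero_where_tau_zero:
  assumes D: "D \<in> Gfilt Q F \<tau> 0"
  shows "ae_preimage_on (F 0) id (\<lambda>\<omega>. \<tau> \<omega> \<le> 0) D"
  using tau_nonneg
  by (intro ae_preimage_on_F_of_Gfilt[OF _ D, where Pm = "\<lambda>m \<omega>. \<tau> \<omega> \<le> 0" and c = "\<lambda>m. 0"])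
     (auto simp: min_def antisym)

definition Rplus :: "ereal measure" where
  "Rplus = restrict_space borel {0..}"

definition F_space :: "real \<Rightarrow> 'a measure" where
  "F_space t = measure_of (space Q) (F t) (\<lambda>_. 0)"

lemma space_Rplus: "space Rplus = {0..}"
  unfolding Rplus_def by (simp add: space_restrict_space)

lemma Int_in_Rplus: "B \<in> sets (borel :: ereal measure) \<Longrightarrow> {0..} \<inter> B \<in> sets Rplus"
  unfolding Rplus_def sets_restrict_space by auto

lemma sets_F_space: "0 \<le> t \<Longrightarrow> sets (F_space t) = F t"
  unfolding F_space_def using sigma_algebra_F by (simp add: sigma_algebra.sets_measure_of_eq)

lemma space_F_space: "0 \<le> t \<Longrightarrow> space (F_space t) = space Q"
  unfolding F_space_def using F_into_space by (auto simp: space_measure_of_conv)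

lemma Gfilt_after_tau:
  assumes a: "0 \<le> a" and s: "a < s" and D: "D \<in> Gfilt Q F \<tau> a"
  shows "ae_preimage_on (sets (Rplus \<Otimes>\<^sub>M F_space s)) (\<lambda>\<omega>. (\<tau> \<omega>, \<omega>)) (\<lambda>\<omega>. \<tau> \<omega> \<le> ereal a) D"
proof -
  let ?P = "Rplus \<Otimes>\<^sub>M F_space s"
  have s0: "0 \<le> s" using a s by simp
  have sa: "sigma_algebra (space ?P) (sets ?P)" by (rule sets.sigma_algebra_axioms)
  have g: "\<forall>\<omega>\<in>space Q. (\<tau> \<omega>, \<omega>) \<in> space ?P"
    using tau_nonneg by (simp add: space_pair_measure space_Rplus space_F_space[OF s0])
  have gen: "ae_preimage_on (sets ?P) (\<lambda>\<omega>. (\<tau> \<omega>, \<omega>)) (\<lambda>\<omega>. \<tau> \<omega> \<le> ereal a) E"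
    if "E \<in> F s \<union> sigma_rv (space Q) (\<lambda>\<omega>. min (\<tau> \<omega>) (ereal s))" for E
    using that
  proof
    assume "E \<in> F s"
    then have "{0..} \<times> E \<in> sets ?P"
      by (intro pair_measureI) (auto simp: sets_F_space[OF s0] space_Rplus[symmetric])
    moreover have "\<forall>\<omega>\<in>space Q - {}. \<tau> \<omega> \<le> ereal a \<longrightarrow> (\<omega> \<in> E \<longleftrightarrow> (\<tau> \<omega>, \<omega>) \<in> {0..} \<times> E)"
      using tau_nonneg by auto
    ultimately show ?thesis unfolding ae_preimage_on_def using negligible_empty by blast
  next
    assume "E \<in> sigma_rv (space Q) (\<lambda>\<omega>. min (\<tau> \<omega>) (ereal s))"
    then obtain B where B: "B \<in> sets borel" "E = (\<lambda>\<omega>. min (\<tau> \<omega>) (ereal s)) -` B \<inter> space Q"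
      unfolding sigma_rv_def by auto
    have "space Q \<in> sets (F_space s)" using sets.top[of "F_space s"] space_F_space[OF s0] by simp
    then have "({0..} \<inter> B) \<times> space Q \<in> sets ?P" using B(1) by (intro pair_measureI Int_in_Rplus)
    moreover have "\<forall>\<omega>\<in>space Q - {}. \<tau> \<omega> \<le> ereal a \<longrightarrow> (\<omega> \<in> E \<longleftrightarrow> (\<tau> \<omega>, \<omega>) \<in> ({0..} \<inter> B) \<times> space Q)"
    proof -
      have "min (\<tau> \<omega>) (ereal s) = \<tau> \<omega>" if "\<tau> \<omega> \<le> ereal a" for \<omega>
        using that s by (simp add: min_def) (meson ereal_less_eq(3) less_imp_le order_trans)
      then show ?thesis using tau_nonneg B(2) by auto
    qed
    ultimately show ?thesis unfolding ae_preimage_on_def using negligible_empty by blast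
  qed
  show ?thesis
  proof (rule ae_preimage_on_sigma_sets[OF sa g _ D[unfolded Gfilt_eq]])
    fix E assume "E \<in> null_sigma Q (tau_Finf Q F \<tau>) \<union> F_right a"
    then show "ae_preimage_on (sets ?P) (\<lambda>\<omega>. (\<tau> \<omega>, \<omega>)) (\<lambda>\<omega>. \<tau> \<omega> \<le> ereal a) E"
    proof
      assume "E \<in> F_right a"
      then have "E \<in> sigma_sets (space Q) (F s \<union> sigma_rv (space Q) (\<lambda>\<omega>. min (\<tau> \<omega>) (ereal s)))"
        using s unfolding F_right_def by blast
      then show ?thesis using ae_preimage_on_sigma_sets[OF sa g] gen by blast
    qed (rule ae_preimage_on_null_sigma[OF sa g])
  qed
qed

abbreviation Opt :: "(real \<times> 'a) measure" where
  "Opt \<equiv> optional_measure (space Q) F"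

lemma sets_Opt: "sets Opt = sigma_sets ({0..} \<times> space Q)
    {{p\<in>{0..} \<times> space Q. X p \<in> B} | X B. cadlag (space Q) X \<and> adapted (space Q) F X \<and> B \<in> sets (borel :: real measure)}"
  and space_Opt: "space Opt = {0..} \<times> space Q"
  unfolding optional_measure_def by (subst sets_measure_of space_measure_of_conv; auto)+

lemma cadlag_adapted_in_Opt:
  "cadlag (space Q) X \<Longrightarrow> adapted (space Q) F X \<Longrightarrow> B \<in> sets borel \<Longrightarrow>
    {p\<in>{0..} \<times> space Q. X p \<in> B} \<in> sets Opt"
  unfolding sets_Opt by (rule sigma_sets.Basic) auto

lemma atLeastLessThan_times_in_Opt:
  assumes \<alpha>: "0 \<le> \<alpha>" and B: "B \<in> F \<alpha>"
  shows "{\<alpha>..<\<beta>} \<times> B \<in> sets Opt"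
proof -
  have B_space: "B \<subseteq> space Q" using F_into_space[OF \<alpha> B] .
  define X where "X = (\<lambda>p::real \<times> 'a. indicator ({\<alpha>..<\<beta>} \<times> B) p :: real)"
  have X: "X (t, \<omega>) = (if t \<in> {\<alpha>..<\<beta>} \<and> \<omega> \<in> B then 1 else 0)" for t \<omega>
    unfolding X_def by (auto simp: indicator_def)
  have "cadlag (space Q) X"
    unfolding cadlag_def
  proof (intro ballI conjI allI impI)
    fix \<omega> t
    show "((\<lambda>s. X (s, \<omega>)) \<longlongrightarrow> X (t, \<omega>)) (at_right t)"
      by (rule tendsto_eventually, rule eventually_mono[OF eventually_at_right_mem_atLeastLessThan[of \<alpha> \<beta> t]])
         (simp add: X)
    obtain c where "eventually (\<lambda>s. s \<in> {\<alpha>..<\<beta>} \<longleftrightarrow> c) (at_left t)"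
      by (rule eventually_at_left_mem_atLeastLessThan)
    then show "\<exists>l. ((\<lambda>s. X (s, \<omega>)) \<longlongrightarrow> l) (at_left t)"
      by (intro exI tendsto_eventually eventually_mono[OF \<open>eventually _ _\<close>]) (simp add: X)
  qed
  moreover have "adapted (space Q) F X"
    unfolding adapted_def
  proof (intro allI impI ballI)
    fix t :: real and C :: "real set" assume t: "0 \<le> t"
    interpret sigma_algebra "space Q" "F t" using sigma_algebra_F t .
    show "{\<omega> \<in> space Q. X (t, \<omega>) \<in> C} \<in> F t"
    proof (cases "t \<in> {\<alpha>..<\<beta>}")
      case True
      then have "B \<in> F t" using F_mono[OF \<alpha>, of t] B by auto
      moreover have "{\<omega> \<in> space Q. X (t, \<omega>) \<in> C} =
          (if 1 \<in> C then B else {}) \<union> (if 0 \<in> C then space Q - B else {})"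
        using True B_space by (auto simp: X)
      ultimately show ?thesis by auto
    next
      case False
      then have "{\<omega> \<in> space Q. X (t, \<omega>) \<in> C} = (if 0 \<in> C then space Q else {})"
        by (auto simp: X)
      then show ?thesis by auto
    qed
  qed
  ultimately have "{p\<in>{0..} \<times> space Q. X p \<in> {1}} \<in> sets Opt"
    by (rule cadlag_adapted_in_Opt) simp
  also have "{p\<in>{0..} \<times> space Q. X p \<in> {1}} = {\<alpha>..<\<beta>} \<times> B"
    using B_space \<alpha> by (auto simp: X split: if_splits)
  finally show ?thesis .
qed

lemma greaterThanAtMost_times_in_Opt:
  assumes c: "0 \<le> c" and B: "B \<in> F c"
  shows "{c<..d} \<times> B \<in> sets Opt"
proof -
  have "{c<..d} \<times> B = (\<Union>m::nat. \<Inter>k::nat. {c + 1 / (real m + 1)..<d + 1 / (real k + 1)} \<times> B)"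
  proof (intro set_eqI iffI)
    fix x assume "x \<in> {c<..d} \<times> B"
    then obtain t \<omega> where x: "x = (t, \<omega>)" "c < t" "t \<le> d" "\<omega> \<in> B" by auto
    obtain m where m: "1 / (real m + 1) < t - c" using ex_one_over_Suc_less[of "t - c"] x(2) by auto
    have "t < d + 1 / (real k + 1)" for k :: nat
      using x(3) divide_pos_pos[of 1 "real k + 1"] by linarith
    then show "x \<in> (\<Union>m. \<Inter>k. {c + 1 / (real m + 1)..<d + 1 / (real k + 1)} \<times> B)"
      using x m by (intro UN_I[of m]) auto
  next
    fix x assume "x \<in> (\<Union>m::nat. \<Inter>k::nat. {c + 1 / (real m + 1)..<d + 1 / (real k + 1)} \<times> B)"
    then obtain m where "\<And>k::nat. x \<in> {c + 1 / (real m + 1)..<d + 1 / (real k + 1)} \<times> B" by blast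
    moreover obtain t \<omega> where x: "x = (t, \<omega>)" by fastforce
    ultimately have m: "\<And>k::nat. t \<in> {c + 1 / (real m + 1)..<d + 1 / (real k + 1)} \<and> \<omega> \<in> B" by simp
    have "t \<le> d"
    proof (rule ccontr)
      assume "\<not> t \<le> d"
      then obtain k where "1 / (real k + 1) < t - d" using ex_one_over_Suc_less[of "t - d"] by auto
      with m[of k] show False by simp
    qed
    moreover have "c < t"
    proof -
      have "c + 1 / (real m + 1) \<le> t" using m[of 0] by simp
      moreover have "0 < 1 / (real m + 1)" by simp
      ultimately show ?thesis by linarith
    qed
    ultimately show "x \<in> {c<..d} \<times> B" using x m[of 0] by simp
  qed
  also have "\<dots> \<in> sets Opt"
  proof (intro sets.countable_UN sets.countable_INT image_subsetI)
    fix m k :: nat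
    have "0 \<le> c + 1 / (real m + 1)" using c by (simp add: add_nonneg_pos)
    moreover have "B \<in> F (c + 1 / (real m + 1))" using F_mono[OF c, of "c + 1 / (real m + 1)"] B by auto
    ultimately show "{c + 1 / (real m + 1)..<d + 1 / (real k + 1)} \<times> B \<in> sets Opt"
      by (rule atLeastLessThan_times_in_Opt)
  qed auto
  finally show ?thesis .
qed

lemma zero_times_in_Opt:
  assumes B: "B \<in> F 0"
  shows "{0} \<times> B \<in> sets Opt"
proof -
  have "{0} \<times> B = (\<Inter>k::nat. {0..<1 / (real k + 1)} \<times> B)"
  proof (intro set_eqI iffI)
    fix x assume "x \<in> (\<Inter>k::nat. {0..<1 / (real k + 1)} \<times> B)"
    moreover obtain t \<omega> where x: "x = (t, \<omega>)" by fastforce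
    ultimately have k: "\<And>k::nat. t \<in> {0..<1 / (real k + 1)} \<and> \<omega> \<in> B" by blast
    have "t \<le> 0"
    proof (rule ccontr)
      assume "\<not> t \<le> 0"
      then obtain k where "1 / (real k + 1) < t" using ex_one_over_Suc_less[of t] by auto
      with k[of k] show False by simp
    qed
    then show "x \<in> {0} \<times> B" using x k[of 0] by auto
  qed auto
  also have "\<dots> \<in> sets Opt"
    using B by (intro sets.countable_INT image_subsetI atLeastLessThan_times_in_Opt) auto
  finally show ?thesis .
qed

abbreviation Rplus_Opt :: "(ereal \<times> real \<times> 'a) measure" where
  "Rplus_Opt \<equiv> Rplus \<Otimes>\<^sub>M Opt"

lemma space_Rplus_Opt: "space Rplus_Opt = {0..} \<times> ({0..} \<times> space Q)"
  by (simp add: space_pair_measure space_Rplus space_Opt)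

lemma strip_in_Rplus_Opt:
  assumes c: "0 \<le> c" and W: "W \<in> sets (Rplus \<Otimes>\<^sub>M F_space c)"
  shows "{x \<in> space Rplus_Opt. (fst x, snd (snd x)) \<in> W \<and> fst (snd x) \<in> {c<..d}} \<in> sets Rplus_Opt"
proof -
  define E where "E W = {x \<in> space Rplus_Opt. (fst x, snd (snd x)) \<in> W \<and> fst (snd x) \<in> {c<..d}}" for W
  have rect: "E (A \<times> B) \<in> sets Rplus_Opt" if A: "A \<in> sets Rplus" and B: "B \<in> F c" for A B
  proof -
    have "A \<subseteq> {0..}" using sets.sets_into_space[OF A] space_Rplus by auto
    then have "E (A \<times> B) = A \<times> ({c<..d} \<times> B)"
      unfolding E_def space_Rplus_Opt using c F_into_space[OF c B] by auto
    also have "\<dots> \<in> sets Rplus_Opt" using A greaterThanAtMost_times_in_Opt[OF c B] by (rule pair_measureI)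
    finally show ?thesis .
  qed
  have "W \<in> sigma_sets (space Rplus \<times> space (F_space c)) {a \<times> b |a b. a \<in> sets Rplus \<and> b \<in> sets (F_space c)}"
    using W by (simp add: sets_pair_measure)
  then have "E W \<in> sets Rplus_Opt"
  proof (induction rule: sigma_sets.induct)
    case (Basic a) then show ?case using rect sets_F_space[OF c] by auto
  next
    case Empty then show ?case by (simp add: E_def)
  next
    case (Compl a)
    have "E (space Rplus \<times> space (F_space c) - a) = E (space Rplus \<times> space (F_space c)) - E a"
      unfolding E_def space_Rplus_Opt space_Rplus space_F_space[OF c] by auto
    moreover have "E (space Rplus \<times> space (F_space c)) \<in> sets Rplus_Opt"
      using rect[of "space Rplus" "space Q"] sets.top[of "F_space c"]
      by (simp add: sets_F_space[OF c] space_F_space[OF c])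
    ultimately show ?case using Compl by auto
  next
    case (Union a)
    have "E (\<Union>i. a i) = (\<Union>i. E (a i))" unfolding E_def by auto
    then show ?case using Union by auto
  qed
  then show ?thesis unfolding E_def .
qed

definition splits :: "(real \<times> 'a \<Rightarrow> real) \<Rightarrow> bool" where
  "splits X \<longleftrightarrow> (\<exists>Y' Y''. Y' \<in> borel_measurable Opt \<and> (\<lambda>z. Y'' (fst z) (snd z)) \<in> borel_measurable Rplus_Opt \<and>
     (\<exists>N\<in>negligible. \<forall>\<omega>\<in>space Q - N. \<forall>t\<ge>0.
        X (t, \<omega>) = (if ereal t < \<tau> \<omega> then Y' (t, \<omega>) else Y'' (\<tau> \<omega>) (t, \<omega>))))"

lemma splitsI:
  assumes "Y' \<in> borel_measurable Opt" "(\<lambda>z. Y'' (fst z) (snd z)) \<in> borel_measurable Rplus_Opt"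
    and "N \<in> negligible"
    and "\<And>\<omega> t. \<omega> \<in> space Q - N \<Longrightarrow> 0 \<le> t \<Longrightarrow>
      X (t, \<omega>) = (if ereal t < \<tau> \<omega> then Y' (t, \<omega>) else Y'' (\<tau> \<omega>) (t, \<omega>))"
  shows "splits X"
  unfolding splits_def using assms by blast

lemma splitsE:
  assumes "splits X"
  obtains Y' Y'' N where "Y' \<in> borel_measurable Opt" "(\<lambda>z. Y'' (fst z) (snd z)) \<in> borel_measurable Rplus_Opt"
    and "N \<in> negligible"
    and "\<And>\<omega> t. \<omega> \<in> space Q - N \<Longrightarrow> 0 \<le> t \<Longrightarrow>
      X (t, \<omega>) = (if ereal t < \<tau> \<omega> then Y' (t, \<omega>) else Y'' (\<tau> \<omega>) (t, \<omega>))"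
  using assms unfolding splits_def by blast

lemma splits_cong:
  assumes "splits X" "\<And>t \<omega>. 0 \<le> t \<Longrightarrow> \<omega> \<in> space Q \<Longrightarrow> X' (t, \<omega>) = X (t, \<omega>)"
  shows "splits X'"
  using assms(1) by (rule splitsE) (rule splitsI, assumption+, simp add: assms(2))

lemma splits_const: "splits (\<lambda>_. c)"
  by (rule splitsI[of "\<lambda>_. c" "\<lambda>_ _. c" "{}"]) (auto simp: negligible_empty)

lemma splits_compose2:
  assumes X1: "splits X1" and X2: "splits X2"
    and f: "(\<lambda>x. f (fst x) (snd x)) \<in> borel_measurable (borel :: (real \<times> real) measure)"
  shows "splits (\<lambda>p. f (X1 p) (X2 p))"
proof -
  obtain Y1' Y1'' N1 where 1: "Y1' \<in> borel_measurable Opt" "(\<lambda>z. Y1'' (fst z) (snd z)) \<in> borel_measurable Rplus_Opt"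
    "N1 \<in> negligible" "\<And>\<omega> t. \<omega> \<in> space Q - N1 \<Longrightarrow> 0 \<le> t \<Longrightarrow>
        X1 (t, \<omega>) = (if ereal t < \<tau> \<omega> then Y1' (t, \<omega>) else Y1'' (\<tau> \<omega>) (t, \<omega>))"
    using splitsE[OF X1] by blast
  obtain Y2' Y2'' N2 where 2: "Y2' \<in> borel_measurable Opt" "(\<lambda>z. Y2'' (fst z) (snd z)) \<in> borel_measurable Rplus_Opt"
    "N2 \<in> negligible" "\<And>\<omega> t. \<omega> \<in> space Q - N2 \<Longrightarrow> 0 \<le> t \<Longrightarrow>
        X2 (t, \<omega>) = (if ereal t < \<tau> \<omega> then Y2' (t, \<omega>) else Y2'' (\<tau> \<omega>) (t, \<omega>))"
    using splitsE[OF X2] by blast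
  have f: "(\<lambda>x. f (fst x) (snd x)) \<in> borel \<Otimes>\<^sub>M borel \<rightarrow>\<^sub>M (borel :: real measure)"
    using f by (simp add: borel_prod)
  show ?thesis
  proof (rule splitsI[of "\<lambda>p. f (Y1' p) (Y2' p)" "\<lambda>u p. f (Y1'' u p) (Y2'' u p)" "N1 \<union> N2"])
    show "(\<lambda>p. f (Y1' p) (Y2' p)) \<in> borel_measurable Opt"
      using measurable_compose[OF measurable_Pair[OF 1(1) 2(1)] f] by simp
    show "(\<lambda>z. f (Y1'' (fst z) (snd z)) (Y2'' (fst z) (snd z))) \<in> borel_measurable Rplus_Opt"
      using measurable_compose[OF measurable_Pair[OF 1(2) 2(2)] f] by simp
    show "N1 \<union> N2 \<in> negligible" using 1(3) 2(3) by (rule negligible_Un)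
  qed (use 1(4) 2(4) in auto)
qed

lemma splits_compose:
  assumes X: "splits X" and f: "f \<in> borel_measurable (borel :: real measure)"
  shows "splits (\<lambda>p. f (X p))"
proof -
  have "(\<lambda>x. f (fst x)) \<in> borel_measurable (borel :: (real \<times> real) measure)"
    using measurable_compose[OF measurable_fst f] by (simp add: borel_prod[symmetric])
  then show ?thesis using splits_compose2[OF X X, of "\<lambda>x y. f x"] by simp
qed

lemma splits_add: "splits X \<Longrightarrow> splits Z \<Longrightarrow> splits (\<lambda>p. X p + Z p)"
  by (rule splits_compose2[of X Z "\<lambda>x y. x + y"]) (unfold borel_prod[symmetric], measurable)

lemma splits_diff: "splits X \<Longrightarrow> splits Z \<Longrightarrow> splits (\<lambda>p. X p - Z p)"
  by (rule splits_compose2[of X Z "\<lambda>x y. x - y"]) (unfold borel_prod[symmetric], measurable)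

lemma splits_mult: "splits X \<Longrightarrow> splits Z \<Longrightarrow> splits (\<lambda>p. X p * Z p)"
  by (rule splits_compose2[of X Z "\<lambda>x y. x * y"]) (unfold borel_prod[symmetric], measurable)

lemma splits_sum: "finite I \<Longrightarrow> (\<And>i. i \<in> I \<Longrightarrow> splits (X i)) \<Longrightarrow> splits (\<lambda>p. \<Sum>i\<in>I. X i p)"
  by (induction rule: finite_induct) (auto intro: splits_add simp: splits_const[of 0, simplified])

text \<open>The limits are taken as \<open>limsup\<close>s, which are measurable; they agree with the pointwise
  limit wherever it exists.\<close>

lemma splits_limit:
  assumes X: "\<And>n::nat. splits (X n)"
    and lim: "\<And>t \<omega>. 0 \<le> t \<Longrightarrow> \<omega> \<in> space Q \<Longrightarrow> (\<lambda>n. X n (t, \<omega>)) \<longlonglongrightarrow> X0 (t, \<omega>)"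
  shows "splits X0"
proof -
  have "\<forall>n. \<exists>Y' Y'' N. Y' \<in> borel_measurable Opt \<and> (\<lambda>z. Y'' (fst z) (snd z)) \<in> borel_measurable Rplus_Opt \<and>
     N \<in> negligible \<and> (\<forall>\<omega>\<in>space Q - N. \<forall>t\<ge>0.
        X n (t, \<omega>) = (if ereal t < \<tau> \<omega> then Y' (t, \<omega>) else Y'' (\<tau> \<omega>) (t, \<omega>)))"
    using X unfolding splits_def by blast
  then obtain Y' Y'' N where "\<forall>n. Y' n \<in> borel_measurable Opt \<and>
      (\<lambda>z. Y'' n (fst z) (snd z)) \<in> borel_measurable Rplus_Opt \<and> N n \<in> negligible \<and>
      (\<forall>\<omega>\<in>space Q - N n. \<forall>t\<ge>0.
        X n (t, \<omega>) = (if ereal t < \<tau> \<omega> then Y' n (t, \<omega>) else Y'' n (\<tau> \<omega>) (t, \<omega>)))"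
    unfolding choice_iff by blast
  then have Y': "\<And>n. Y' n \<in> borel_measurable Opt"
    and Y'': "\<And>n. (\<lambda>z. Y'' n (fst z) (snd z)) \<in> borel_measurable Rplus_Opt"
    and N: "\<And>n. N n \<in> negligible"
    and eq: "\<And>n. \<forall>\<omega>\<in>space Q - N n. \<forall>t\<ge>0.
      X n (t, \<omega>) = (if ereal t < \<tau> \<omega> then Y' n (t, \<omega>) else Y'' n (\<tau> \<omega>) (t, \<omega>))"
    by blast+
  have limsup_eq: "real_of_ereal (limsup (\<lambda>n. ereal (X n (t, \<omega>)))) = X0 (t, \<omega>)"
    if "0 \<le> t" "\<omega> \<in> space Q" for t \<omega>
  proof -
    have "(\<lambda>n. ereal (X n (t, \<omega>))) \<longlonglongrightarrow> ereal (X0 (t, \<omega>))" using lim[OF that] by (simp add: lim_ereal)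
    then have "limsup (\<lambda>n. ereal (X n (t, \<omega>))) = ereal (X0 (t, \<omega>))"
      by (rule lim_imp_Limsup[OF trivial_limit_sequentially])
    then show ?thesis by simp
  qed
  show ?thesis
  proof (rule splitsI[of "\<lambda>p. real_of_ereal (limsup (\<lambda>n. ereal (Y' n p)))"
        "\<lambda>u p. real_of_ereal (limsup (\<lambda>n. ereal (Y'' n u p)))" "\<Union>n. N n"])
    show "(\<lambda>p. real_of_ereal (limsup (\<lambda>n. ereal (Y' n p)))) \<in> borel_measurable Opt"
      using Y' by (intro borel_measurable_real_of_ereal borel_measurable_limsup borel_measurable_ereal)
    show "(\<lambda>z. real_of_ereal (limsup (\<lambda>n. ereal (Y'' n (fst z) (snd z))))) \<in> borel_measurable Rplus_Opt"
      using Y'' by (intro borel_measurable_real_of_ereal borel_measurable_limsup borel_measurable_ereal)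
    show "(\<Union>n. N n) \<in> negligible" using N by (rule negligible_UN)
  next
    fix \<omega> and t :: real assume \<omega>: "\<omega> \<in> space Q - (\<Union>n. N n)" and t: "0 \<le> t"
    then have X: "X n (t, \<omega>) = (if ereal t < \<tau> \<omega> then Y' n (t, \<omega>) else Y'' n (\<tau> \<omega>) (t, \<omega>))" for n
      using eq by blast
    show "X0 (t, \<omega>) = (if ereal t < \<tau> \<omega> then real_of_ereal (limsup (\<lambda>n. ereal (Y' n (t, \<omega>))))
        else real_of_ereal (limsup (\<lambda>n. ereal (Y'' n (\<tau> \<omega>) (t, \<omega>)))))"
      using limsup_eq[OF t, of \<omega>] \<omega> unfolding X by (cases "ereal t < \<tau> \<omega>") simp_all
  qed
qed

lemma optional_splitting_iff:
  "optional_splitting Q F \<tau> Y A \<longleftrightarrow>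
    (\<exists>Y' Y''. Y' \<in> borel_measurable Opt \<and> (\<lambda>z. Y'' (fst z) (snd z)) \<in> borel_measurable Rplus_Opt \<and>
      (\<exists>N\<in>negligible. \<forall>\<omega>\<in>space Q - N. \<forall>t\<ge>0. (t, \<omega>) \<in> A \<longrightarrow>
         Y (t, \<omega>) = (if ereal t < \<tau> \<omega> then Y' (t, \<omega>) else Y'' (\<tau> \<omega>) (t, \<omega>))))"
proof -
  have pointwise: "Y (t, \<omega>) * indicator A (t, \<omega>) =
      (Y' (t, \<omega>) * indicator {p. ereal (fst p) < \<tau> (snd p)} (t, \<omega>)
       + Y'' (\<tau> \<omega>) (t, \<omega>) * indicator {p. \<tau> (snd p) \<le> ereal (fst p)} (t, \<omega>)) * indicator A (t, \<omega>)
    \<longleftrightarrow> ((t, \<omega>) \<in> A \<longrightarrow> Y (t, \<omega>) = (if ereal t < \<tau> \<omega> then Y' (t, \<omega>) else Y'' (\<tau> \<omega>) (t, \<omega>)))"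
    for Y' Y'' t \<omega>
  proof (cases "ereal t < \<tau> \<omega>")
    case True
    then have "\<not> \<tau> \<omega> \<le> ereal t" by (simp add: not_le)
    with True show ?thesis by (simp add: indicator_def)
  next
    case False
    then have "\<tau> \<omega> \<le> ereal t" by (simp add: not_less)
    with False show ?thesis by (simp add: indicator_def)
  qed
  show ?thesis
    by (simp only: optional_splitting_def pointwise negligible_def Rplus_def split_beta'
        Bex_def mem_Collect_eq conj_assoc)
qed

lemma splits_times_indicator:
  assumes "optional_splitting Q F \<tau> Y A" and "splits (indicator A)"
  shows "splits (\<lambda>p. Y p * indicator A p)"
proof -
  obtain Y' Y'' N where Y': "Y' \<in> borel_measurable Opt" "(\<lambda>z. Y'' (fst z) (snd z)) \<in> borel_measurable Rplus_Opt"
    and N: "N \<in> negligible" and eq: "\<forall>\<omega>\<in>space Q - N. \<forall>t\<ge>0. (t, \<omega>) \<in> A \<longrightarrow>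
         Y (t, \<omega>) = (if ereal t < \<tau> \<omega> then Y' (t, \<omega>) else Y'' (\<tau> \<omega>) (t, \<omega>))"
    using assms(1) unfolding optional_splitting_iff by (elim exE bexE conjE) (rule that)
  obtain Z' Z'' M where Z': "Z' \<in> borel_measurable Opt" "(\<lambda>z. Z'' (fst z) (snd z)) \<in> borel_measurable Rplus_Opt"
    and M: "M \<in> negligible" and eqZ: "\<And>\<omega> t. \<omega> \<in> space Q - M \<Longrightarrow> 0 \<le> t \<Longrightarrow>
         indicator A (t, \<omega>) = (if ereal t < \<tau> \<omega> then Z' (t, \<omega>) else Z'' (\<tau> \<omega>) (t, \<omega>) :: real)"
    using splitsE[OF assms(2)] by blast
  show ?thesis
  proof (rule splitsI)
    show "(\<lambda>p. Y' p * Z' p) \<in> borel_measurable Opt" using Y'(1) Z'(1) by (rule borel_measurable_times)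
    show "(\<lambda>z. Y'' (fst z) (snd z) * Z'' (fst z) (snd z)) \<in> borel_measurable Rplus_Opt"
      using Y'(2) Z'(2) by (rule borel_measurable_times)
    show "N \<union> M \<in> negligible" using N M by (rule negligible_Un)
    fix \<omega> and t :: real assume \<omega>: "\<omega> \<in> space Q - (N \<union> M)" and t: "0 \<le> t"
    then have Z: "indicator A (t, \<omega>) = (if ereal t < \<tau> \<omega> then Z' (t, \<omega>) else Z'' (\<tau> \<omega>) (t, \<omega>) :: real)"
      by (intro eqZ) auto
    show "Y (t, \<omega>) * indicator A (t, \<omega>) =
      (if ereal t < \<tau> \<omega> then Y' (t, \<omega>) * Z' (t, \<omega>) else Y'' (\<tau> \<omega>) (t, \<omega>) * Z'' (\<tau> \<omega>) (t, \<omega>))"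
    proof (cases "(t, \<omega>) \<in> A")
      case True
      then have "Y (t, \<omega>) = (if ereal t < \<tau> \<omega> then Y' (t, \<omega>) else Y'' (\<tau> \<omega>) (t, \<omega>))"
        using bspec[OF eq, of \<omega>] \<omega> t True by simp
      then show ?thesis using Z by simp
    next
      case False
      then show ?thesis using Z by (simp split: if_splits)
    qed
  qed
qed

lemma optional_splitting_of_splits:
  assumes "splits (\<lambda>p. Y p * indicator A p)"
  shows "optional_splitting Q F \<tau> Y A"
proof -
  obtain Y' Y'' N where Y': "Y' \<in> borel_measurable Opt" "(\<lambda>z. Y'' (fst z) (snd z)) \<in> borel_measurable Rplus_Opt"
    and N: "N \<in> negligible" and eq: "\<And>\<omega> t. \<omega> \<in> space Q - N \<Longrightarrow> 0 \<le> t \<Longrightarrow>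
      Y (t, \<omega>) * indicator A (t, \<omega>) = (if ereal t < \<tau> \<omega> then Y' (t, \<omega>) else Y'' (\<tau> \<omega>) (t, \<omega>))"
    using splitsE[OF assms] by blast
  have "\<forall>\<omega>\<in>space Q - N. \<forall>t\<ge>0. (t, \<omega>) \<in> A \<longrightarrow>
      Y (t, \<omega>) = (if ereal t < \<tau> \<omega> then Y' (t, \<omega>) else Y'' (\<tau> \<omega>) (t, \<omega>))"
  proof (intro ballI allI impI)
    fix \<omega> and t :: real assume "\<omega> \<in> space Q - N" "0 \<le> t" "(t, \<omega>) \<in> A"
    then show "Y (t, \<omega>) = (if ereal t < \<tau> \<omega> then Y' (t, \<omega>) else Y'' (\<tau> \<omega>) (t, \<omega>))"
      using eq[of \<omega> t] by simp
  qed
  then show ?thesis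
    unfolding optional_splitting_iff using Y' N by (intro exI[of _ Y'] exI[of _ Y''] conjI bexI[of _ N])
qed

lemma splits_times_indicator_Un:
  assumes "splits (\<lambda>p. Y p * indicator A p)" "splits (\<lambda>p. Y p * indicator B p)" "splits (indicator B)"
  shows "splits (\<lambda>p. Y p * indicator (A \<union> B) p)"
proof -
  have "splits (\<lambda>p. Y p * indicator A p + Y p * indicator B p - Y p * indicator A p * indicator B p)"
    using splits_diff[OF splits_add[OF assms(1,2)] splits_mult[OF assms(1,3)]] .
  then show ?thesis by (rule splits_cong) (simp add: indicator_def)
qed

lemma splits_times_indicator_UN:
  assumes YA: "\<And>i::nat. splits (\<lambda>p. Y p * indicator (A i) p)" and A: "\<And>i. splits (indicator (A i))"
  shows "splits (\<lambda>p. Y p * indicator (\<Union>i. A i) p)"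
proof (rule splits_limit)
  show "splits (\<lambda>p. Y p * indicator (\<Union>i<n. A i) p)" for n
  proof (induction n)
    case 0 then show ?case using splits_const[of 0] by simp
  next
    case (Suc n)
    have "splits (\<lambda>p. Y p * indicator ((\<Union>i<n. A i) \<union> A n) p)"
      using Suc YA A by (rule splits_times_indicator_Un)
    then show ?case by (simp add: lessThan_Suc Un_commute)
  qed
  show "(\<lambda>n. Y (t, \<omega>) * indicator (\<Union>i<n. A i) (t, \<omega>)) \<longlonglongrightarrow> Y (t, \<omega>) * indicator (\<Union>i. A i) (t, \<omega>)"
    for t \<omega> by (intro tendsto_mult_left LIMSEQ_indicator_UN)
qed

lemma splits_indicator_UN: "(\<And>i::nat. splits (indicator (A i))) \<Longrightarrow> splits (indicator (\<Union>i. A i))"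
  using splits_times_indicator_UN[of "\<lambda>_. 1" A] by simp

lemma Gfilt_after_tau_times_interval:
  assumes a: "0 \<le> a" and D: "D \<in> Gfilt Q F \<tau> a"
  obtains E N where "E \<in> sets Rplus_Opt" "N \<in> negligible"
    "\<And>\<omega> t. \<omega> \<in> space Q - N \<Longrightarrow> 0 \<le> t \<Longrightarrow> \<tau> \<omega> \<le> ereal a \<Longrightarrow>
      (\<tau> \<omega>, t, \<omega>) \<in> E \<longleftrightarrow> \<omega> \<in> D \<and> t \<in> {a<..b}"
proof -
  define s where "s m = a + 1 / (real m + 1)" for m :: nat
  have s: "a < s m" for m unfolding s_def by simp
  have "\<forall>m. \<exists>N\<in>negligible. \<exists>W\<in>sets (Rplus \<Otimes>\<^sub>M F_space (s m)).
      \<forall>\<omega>\<in>space Q - N. \<tau> \<omega> \<le> ereal a \<longrightarrow> (\<omega> \<in> D \<longleftrightarrow> (\<tau> \<omega>, \<omega>) \<in> W)"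
    using Gfilt_after_tau[OF a s D] unfolding ae_preimage_on_def by blast
  then obtain N W where N: "\<And>m. N m \<in> negligible" and W: "\<And>m. W m \<in> sets (Rplus \<Otimes>\<^sub>M F_space (s m))"
    and DW: "\<And>m. \<forall>\<omega>\<in>space Q - N m. \<tau> \<omega> \<le> ereal a \<longrightarrow> (\<omega> \<in> D \<longleftrightarrow> (\<tau> \<omega>, \<omega>) \<in> W m)"
    by metis
  define S where "S m = {x \<in> space Rplus_Opt. (fst x, snd (snd x)) \<in> W m \<and> fst (snd x) \<in> {s m<..b}}" for m
  show ?thesis
  proof (rule that[of "\<Union>m. S m" "\<Union>m. N m"])
    have "S m \<in> sets Rplus_Opt" for m
      unfolding S_def using a s[of m] W[of m] by (intro strip_in_Rplus_Opt) auto
    then show "(\<Union>m. S m) \<in> sets Rplus_Opt" by blast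
    show "(\<Union>m. N m) \<in> negligible" using N by (rule negligible_UN)
  next
    fix \<omega> and t :: real assume \<omega>: "\<omega> \<in> space Q - (\<Union>m. N m)" and t: "0 \<le> t" and \<tau>a: "\<tau> \<omega> \<le> ereal a"
    have sp: "(\<tau> \<omega>, t, \<omega>) \<in> space Rplus_Opt" using \<omega> t tau_nonneg by (simp add: space_Rplus_Opt)
    have DW': "\<omega> \<in> D \<longleftrightarrow> (\<tau> \<omega>, \<omega>) \<in> W m" for m using DW[of m] \<omega> \<tau>a by blast
    show "(\<tau> \<omega>, t, \<omega>) \<in> (\<Union>m. S m) \<longleftrightarrow> \<omega> \<in> D \<and> t \<in> {a<..b}"
    proof
      assume "(\<tau> \<omega>, t, \<omega>) \<in> (\<Union>m. S m)"
      then obtain m where "(\<tau> \<omega>, \<omega>) \<in> W m" "s m < t" "t \<le> b" unfolding S_def by auto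
      then show "\<omega> \<in> D \<and> t \<in> {a<..b}" using DW' s[of m] by auto
    next
      assume "\<omega> \<in> D \<and> t \<in> {a<..b}"
      moreover obtain m where "1 / (real m + 1) < t - a" using ex_one_over_Suc_less[of "t - a"] calculation by auto
      ultimately have "(\<tau> \<omega>, t, \<omega>) \<in> S m"
        using DW' sp unfolding S_def s_def by auto
      then show "(\<tau> \<omega>, t, \<omega>) \<in> (\<Union>m. S m)" by blast
    qed
  qed
qed

lemma splits_indicator_Gfilt_times_interval:
  assumes a: "0 \<le> a" and D: "D \<in> Gfilt Q F \<tau> a"
  shows "splits (\<lambda>p. indicator D (snd p) * indicator {a<..b} (fst p))"
proof -
  obtain N1 D' where N1: "N1 \<in> negligible" and D': "D' \<in> F a"
    and before: "\<forall>\<omega>\<in>space Q - N1. ereal a < \<tau> \<omega> \<longrightarrow> (\<omega> \<in> D \<longleftrightarrow> \<omega> \<in> D')"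
    using Gfilt_before_tau[OF a D] unfolding ae_preimage_on_def by auto
  obtain E N2 where E: "E \<in> sets Rplus_Opt" and N2: "N2 \<in> negligible"
    and after: "\<And>\<omega> t. \<omega> \<in> space Q - N2 \<Longrightarrow> 0 \<le> t \<Longrightarrow> \<tau> \<omega> \<le> ereal a \<Longrightarrow>
      (\<tau> \<omega>, t, \<omega>) \<in> E \<longleftrightarrow> \<omega> \<in> D \<and> t \<in> {a<..b}"
    using Gfilt_after_tau_times_interval[OF a D] by blast
  define V :: "(ereal \<times> real \<times> 'a) set" where "V = ({0..} \<inter> {ereal a<..}) \<times> ({a<..b} \<times> D') \<union> (({0..} \<inter> {..ereal a}) \<times> space Opt) \<inter> E"
  have V: "V \<in> sets Rplus_Opt"
    unfolding V_def using greaterThanAtMost_times_in_Opt[OF a D'] E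
    by (intro sets.Un sets.Int pair_measureI Int_in_Rplus sets.top) auto
  show ?thesis
  proof (rule splitsI[of "indicator ({a<..b} \<times> D')" "\<lambda>u p. indicator V (u, p)" "N1 \<union> N2"])
    show "indicator ({a<..b} \<times> D') \<in> borel_measurable Opt"
      using greaterThanAtMost_times_in_Opt[OF a D'] by (rule borel_measurable_indicator)
    show "(\<lambda>z. indicator V (fst z, snd z) :: real) \<in> borel_measurable Rplus_Opt" using V by simp
    show "N1 \<union> N2 \<in> negligible" using N1 N2 by (rule negligible_Un)
  next
    fix \<omega> and t :: real assume \<omega>: "\<omega> \<in> space Q - (N1 \<union> N2)" and t: "0 \<le> t"
    have "\<omega> \<in> D \<and> t \<in> {a<..b} \<longleftrightarrow>
        (if ereal t < \<tau> \<omega> then (t, \<omega>) \<in> {a<..b} \<times> D' else (\<tau> \<omega>, t, \<omega>) \<in> V)"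
    proof (cases "ereal a < \<tau> \<omega>")
      case True
      then show ?thesis using before \<omega> tau_nonneg unfolding V_def by auto
    next
      case False
      moreover have "ereal t < \<tau> \<omega> \<Longrightarrow> t \<in> {a<..b} \<Longrightarrow> ereal a < \<tau> \<omega>"
        by (meson ereal_less_eq(3) greaterThanAtMost_iff less_imp_le not_less order_trans)
      ultimately show ?thesis
        using after[of \<omega> t] \<omega> t tau_nonneg unfolding V_def by (auto simp: space_Opt not_less)
    qed
    then show "indicator D (snd (t, \<omega>)) * indicator {a<..b} (fst (t, \<omega>)) =
      (if ereal t < \<tau> \<omega> then indicator ({a<..b} \<times> D') (t, \<omega>) else indicator V (\<tau> \<omega>, t, \<omega>) :: real)"
      by (cases "ereal t < \<tau> \<omega>") (auto simp: indicator_def)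
  qed
qed

lemma splits_indicator_Gfilt_times_zero:
  assumes D: "D \<in> Gfilt Q F \<tau> 0"
  shows "splits (\<lambda>p. indicator D (snd p) * indicator {0} (fst p))"
proof -
  obtain N1 D' where N1: "N1 \<in> negligible" and D': "D' \<in> F 0"
    and before: "\<forall>\<omega>\<in>space Q - N1. ereal 0 < \<tau> \<omega> \<longrightarrow> (\<omega> \<in> D \<longleftrightarrow> \<omega> \<in> D')"
    using Gfilt_before_tau[of 0 D] D unfolding ae_preimage_on_def by auto
  obtain N2 C where N2: "N2 \<in> negligible" and C: "C \<in> F 0"
    and at_zero: "\<forall>\<omega>\<in>space Q - N2. \<tau> \<omega> \<le> 0 \<longrightarrow> (\<omega> \<in> D \<longleftrightarrow> \<omega> \<in> C)"
    using Gfilt_zero_where_tau_zero[OF D] unfolding ae_preimage_on_def by auto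
  define V :: "(ereal \<times> real \<times> 'a) set" where "V = ({0..} \<inter> {0<..}) \<times> ({0} \<times> D') \<union> ({0..} \<inter> {..0}) \<times> ({0} \<times> C)"
  have V: "V \<in> sets Rplus_Opt" unfolding V_def
    by (intro sets.Un pair_measureI Int_in_Rplus zero_times_in_Opt D' C) auto
  show ?thesis
  proof (rule splitsI[of "indicator ({0} \<times> D')" "\<lambda>u p. indicator V (u, p)" "N1 \<union> N2"])
    show "indicator ({0} \<times> D') \<in> borel_measurable Opt"
      using zero_times_in_Opt[OF D'] by (rule borel_measurable_indicator)
    show "(\<lambda>z. indicator V (fst z, snd z) :: real) \<in> borel_measurable Rplus_Opt" using V by simp
    show "N1 \<union> N2 \<in> negligible" using N1 N2 by (rule negligible_Un)
  next
    fix \<omega> and t :: real assume \<omega>: "\<omega> \<in> space Q - (N1 \<union> N2)" and t: "0 \<le> t"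
    have "\<omega> \<in> D \<and> t = 0 \<longleftrightarrow> (if ereal t < \<tau> \<omega> then (t, \<omega>) \<in> {0} \<times> D' else (\<tau> \<omega>, t, \<omega>) \<in> V)"
    proof (cases "0 < \<tau> \<omega>")
      case True
      then show ?thesis using before \<omega> tau_nonneg unfolding V_def by (auto simp: zero_ereal_def)
    next
      case False
      then show ?thesis using at_zero \<omega> tau_nonneg t unfolding V_def by (auto simp: not_less)
    qed
    then show "indicator D (snd (t, \<omega>)) * indicator {0} (fst (t, \<omega>)) =
      (if ereal t < \<tau> \<omega> then indicator ({0} \<times> D') (t, \<omega>) else indicator V (\<tau> \<omega>, t, \<omega>) :: real)"
      by (cases "ereal t < \<tau> \<omega>") (auto simp: indicator_def)
  qed
qed

lemma Gfilt_generators_subset_Pow: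
  assumes a: "0 \<le> a"
  shows "null_sigma Q (tau_Finf Q F \<tau>) \<union> F_right a \<subseteq> Pow (space Q)"
proof -
  have "{B. \<exists>C\<in>tau_Finf Q F \<tau>. C \<in> sets Q \<and> emeasure Q C = 0 \<and> B \<subseteq> C} \<subseteq> Pow (space Q)"
    using sets.sets_into_space by blast
  then have "null_sigma Q (tau_Finf Q F \<tau>) \<subseteq> Pow (space Q)"
    unfolding null_sigma_def using sigma_sets_into_sp by blast
  moreover have "F_right a \<subseteq> Pow (space Q)"
  proof
    fix E assume "E \<in> F_right a"
    then have "E \<in> sigma_sets (space Q) (F (a + 1) \<union> sigma_rv (space Q) (\<lambda>\<omega>. min (\<tau> \<omega>) (ereal (a + 1))))"
      unfolding F_right_def by (rule INT_D) simp
    moreover have "F (a + 1) \<union> sigma_rv (space Q) (\<lambda>\<omega>. min (\<tau> \<omega>) (ereal (a + 1))) \<subseteq> Pow (space Q)"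
      using F_into_space[of "a + 1"] a unfolding sigma_rv_def by auto
    ultimately show "E \<in> Pow (space Q)" using sigma_sets_into_sp by blast
  qed
  ultimately show ?thesis by blast
qed

definition G_space :: "real \<Rightarrow> 'a measure" where
  "G_space t = measure_of (space Q) (Gfilt Q F \<tau> t) (\<lambda>_. 0)"

lemma Gfilt_subset_Pow: "0 \<le> t \<Longrightarrow> Gfilt Q F \<tau> t \<subseteq> Pow (space Q)"
  unfolding Gfilt_eq using sigma_sets_into_sp[OF Gfilt_generators_subset_Pow] by blast

lemma sets_G_space: "0 \<le> t \<Longrightarrow> sets (G_space t) = Gfilt Q F \<tau> t"
  unfolding G_space_def using Gfilt_subset_Pow Gfilt_generators_subset_Pow
  by (simp add: sets_measure_of Gfilt_eq sigma_sets_sigma_sets_eq)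

lemma space_G_space: "0 \<le> t \<Longrightarrow> space (G_space t) = space Q"
  unfolding G_space_def using Gfilt_subset_Pow by (simp add: space_measure_of_conv)

lemma splits_Gfilt_measurable_times:
  assumes a: "0 \<le> a"
    and indicator_splits: "\<And>D. D \<in> Gfilt Q F \<tau> a \<Longrightarrow> splits (\<lambda>p. indicator D (snd p) * h (fst p))"
    and Z: "Z \<in> borel_measurable (G_space a)"
  shows "splits (\<lambda>p. Z (snd p) * h (fst p))"
proof -
  obtain G where G: "\<And>i. simple_function (G_space a) (G i)"
    and lim: "\<And>x. x \<in> space (G_space a) \<Longrightarrow> (\<lambda>i. G i x) \<longlonglongrightarrow> Z x"
    using borel_measurable_implies_sequence_metric[OF Z, of 0] by blast
  have "splits (\<lambda>p. G i (snd p) * h (fst p))" for i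
  proof -
    let ?R = "G i ` space (G_space a)"
    have "finite ?R" using G[of i] unfolding simple_function_def by blast
    moreover have "G i -` {y} \<inter> space (G_space a) \<in> Gfilt Q F \<tau> a" for y
      using simple_functionD(2)[OF G[of i], of "{y}"] sets_G_space[OF a] by simp
    ultimately have "splits (\<lambda>p. \<Sum>y\<in>?R. y * (indicator (G i -` {y} \<inter> space (G_space a)) (snd p) * h (fst p)))"
      by (intro splits_sum splits_mult[OF splits_const] indicator_splits)
    then show ?thesis
    proof (rule splits_cong)
      fix t and \<omega> assume "\<omega> \<in> space Q"
      then have \<omega>: "\<omega> \<in> space (G_space a)" using space_G_space[OF a] by simp
      have "(\<Sum>y\<in>?R. y * indicator (G i -` {y} \<inter> space (G_space a)) \<omega>) = (\<Sum>y\<in>?R. if y = G i \<omega> then y else 0)"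
        using \<omega> by (intro sum.cong) (auto simp: indicator_def)
      also have "\<dots> = G i \<omega>" using \<open>finite ?R\<close> \<omega> by (simp add: sum.delta')
      finally have rep: "G i \<omega> = (\<Sum>y\<in>?R. y * indicator (G i -` {y} \<inter> space (G_space a)) \<omega>)" ..
      show "G i (snd (t, \<omega>)) * h (fst (t, \<omega>)) =
          (\<Sum>y\<in>?R. y * (indicator (G i -` {y} \<inter> space (G_space a)) (snd (t, \<omega>)) * h (fst (t, \<omega>))))"
        unfolding fst_conv snd_conv by (subst rep) (simp only: sum_distrib_right mult.assoc)
    qed
  qed
  then show ?thesis
  proof (rule splits_limit)
    fix t \<omega> assume "\<omega> \<in> space Q"
    then show "(\<lambda>n. G n (snd (t, \<omega>)) * h (fst (t, \<omega>))) \<longlonglongrightarrow> Z (snd (t, \<omega>)) * h (fst (t, \<omega>))"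
      using lim space_G_space[OF a] by (auto intro: tendsto_mult_right)
  qed
qed

lemma adapted_Gfilt_measurable:
  assumes "adapted (space Q) (Gfilt Q F \<tau>) X" "0 \<le> t"
  shows "(\<lambda>\<omega>. X (t, \<omega>)) \<in> borel_measurable (G_space t)"
proof (rule measurableI)
  fix B :: "real set" assume "B \<in> sets borel"
  then show "(\<lambda>\<omega>. X (t, \<omega>)) -` B \<inter> space (G_space t) \<in> sets (G_space t)"
    using assms unfolding adapted_def sets_G_space[OF assms(2)] space_G_space[OF assms(2)]
    by (auto simp: vimage_def Int_def conj_commute)
qed simp

lemma splits_left_continuous_adapted:
  assumes lc: "left_continuous (space Q) X" and ad: "adapted (space Q) (Gfilt Q F \<tau>) X"
  shows "splits X"
proof (rule splits_limit)
  fix n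
  have "splits (\<lambda>p. X (0, snd p) * indicator {0} (fst p))"
    using splits_Gfilt_measurable_times[of 0 "indicator {0}" "\<lambda>\<omega>. X (0, \<omega>)"]
      splits_indicator_Gfilt_times_zero adapted_Gfilt_measurable[OF ad order_refl] by simp
  moreover have "splits (\<lambda>p. X (real k / 2^n, snd p) * indicator {real k / 2^n<..(real k + 1) / 2^n} (fst p))"
    for k
    using splits_Gfilt_measurable_times[of "real k / 2^n" "indicator {real k / 2^n<..(real k + 1) / 2^n}"
        "\<lambda>\<omega>. X (real k / 2^n, \<omega>)"]
      splits_indicator_Gfilt_times_interval adapted_Gfilt_measurable[OF ad] by simp
  ultimately show "splits (\<lambda>p. dyadic_approx (\<lambda>s. X (s, snd p)) n (fst p))"
    unfolding dyadic_approx_def by (intro splits_add splits_sum finite_lessThan)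
next
  fix t :: real and \<omega> assume "0 \<le> t" "\<omega> \<in> space Q"
  then show "(\<lambda>n. dyadic_approx (\<lambda>s. X (s, snd (t, \<omega>))) n (fst (t, \<omega>))) \<longlonglongrightarrow> X (t, \<omega>)"
    using dyadic_approx_tendsto[of "\<lambda>s. X (s, \<omega>)" t] lc unfolding left_continuous_def by simp
qed

lemma splits_indicator_predictable:
  assumes "A \<in> sets (predictable_measure (space Q) (Gfilt Q F \<tau>))"
  shows "splits (indicator A)"
proof -
  let ?Gen = "{{p\<in>{0..} \<times> space Q. X p \<in> B} | X B. left_continuous (space Q) X \<and>
    adapted (space Q) (Gfilt Q F \<tau>) X \<and> B \<in> sets (borel :: real measure)}"
  have "A \<in> sigma_sets ({0..} \<times> space Q) ?Gen"
    using assms unfolding predictable_measure_def by (subst (asm) sets_measure_of) auto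
  then show ?thesis
  proof (induction rule: sigma_sets.induct)
    case (Basic a)
    then obtain X B where a: "a = {p\<in>{0..} \<times> space Q. X p \<in> B}" and X: "left_continuous (space Q) X"
      "adapted (space Q) (Gfilt Q F \<tau>) X" and B: "B \<in> sets (borel :: real measure)"
      by blast
    have "splits (\<lambda>p. indicator B (X p))"
      using splits_left_continuous_adapted[OF X] borel_measurable_indicator[OF B] by (rule splits_compose)
    then show ?case by (rule splits_cong) (simp add: a indicator_def)
  next
    case Empty then show ?case using splits_const[of 0] by simp
  next
    case (Compl a)
    have "splits (\<lambda>p. 1 - indicator a p)" using splits_const Compl.IH by (rule splits_diff)
    then show ?case by (rule splits_cong) (auto simp: indicator_def)
  next
    case (Union a)
    show ?case by (rule splits_indicator_UN[OF Union.IH])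
  qed
qed

end

theorem mainTheorem5:
  fixes Q :: "'a measure" and F :: "real \<Rightarrow> 'a set set" and \<tau> :: "'a \<Rightarrow> ereal"
    and As :: "nat \<Rightarrow> (real \<times> 'a) set"
  assumes "prob_space Q"
    and "rc_filtration Q F"
    and "null_sigma Q (F_infty (space Q) F) \<subseteq> F 0"
    and "\<tau> \<in> borel_measurable Q"
    and "\<forall>\<omega>\<in>space Q. 0 \<le> \<tau> \<omega>"
    and "\<forall>i. As i \<in> sets (predictable_measure (space Q) (Gfilt Q F \<tau>))"
    and "\<forall>i. As i \<in> Lo Q F \<tau>"
  shows "(\<Union>i. As i) \<in> Lo Q F \<tau>"
proof -
  interpret enlargement Q F \<tau> using assms(2,5) by unfold_locales
  let ?G = "optional_measure (space Q) (Gfilt Q F \<tau>)"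
  have split_As: "splits (indicator (As i))" for i
    using assms(6) by (intro splits_indicator_predictable) blast
  have "optional_splitting Q F \<tau> Y (\<Union>i. As i)" if "Y \<in> borel_measurable ?G" for Y
  proof (rule optional_splitting_of_splits, rule splits_times_indicator_UN[OF _ split_As])
    show "splits (\<lambda>p. Y p * indicator (As i) p)" for i
      using assms(7) that split_As unfolding Lo_def by (blast intro: splits_times_indicator)
  qed
  moreover have "(\<Union>i. As i) \<in> sets ?G" using assms(7) unfolding Lo_def by blast
  ultimately show ?thesis unfolding Lo_def by blast
qed

end
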